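(* Let $N\ge1$. The entries of the matrices $\mathbf D$ and $\mathbf D^\dagger$ satisfy $$D_{ij}=-D^\dagger_{N+1-i,\,N+1-j},\qquad 1\le i\le N,\ 1\le j\le N.$$ Equivalently, $\mathbf D_{1:N}=-\mathbf J\mathbf D^\dagger_{1:N}\mathbf J$, where $\mathbf J$ is the $N\times N$ exchange matrix with ones on its counterdiagonal and zeros elsewhere.
   Context: $-1<\tau_1<\dots<\tau_N<1$ are the $N$ Gauss quadrature abscissas (roots of the degree-$N$ Legendre polynomial), $\omega_1,\dots,\omega_N$ the Gauss quadrature weights, $\tau_0=-1$, $\tau_{N+1}=1$. For $1\le i\le N$, $0\le j\le N$, $D_{ij}=\dot L_j(\tau_i)$ with $L_j(\tau)=\prod_{k=0,k\ne j}^N\frac{\tau-\tau_k}{\tau_j-\tau_k}$. For $1\le i,j\le N$, $D^\dagger_{ij}=-(\omega_j/\omega_i)D_{ji}$, and $D^\dagger_{i,N+1}=-\sum_{j=1}^ND^\dagger_{ij}$. $\mathbf D_{1:N}=(D_{ij})_{1\le i,j\le N}$ and $\mathbf D^\dagger_{1:N}=(D^\dagger_{ij})_{1\le i,j\le N}$. *)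

theory Defs
  imports "HOL-Analysis.Analysis" "HOL-Computational_Algebra.Polynomial"
begin

fun legendre :: "nat \<Rightarrow> real poly" where
  "legendre 0 = 1"
| "legendre (Suc 0) = [:0, 1:]"
| "legendre (Suc (Suc n)) =
     smult (1 / real (n + 2))
       (smult (real (2 * n + 3)) ([:0, 1:] * legendre (Suc n)) - smult (real (n + 1)) (legendre n))"

definition gauss_tau :: "nat \<Rightarrow> nat \<Rightarrow> real" where
  "gauss_tau N i =
     (if i = 0 then -1
      else if i = N + 1 then 1
      else sorted_list_of_set {x. poly (legendre N) x = 0} ! (i - 1))"

definition gauss_weight :: "nat \<Rightarrow> nat \<Rightarrow> real" where
  "gauss_weight N i =
     integral {-1..1}
       (\<lambda>t. \<Prod>k\<in>{1..N} - {i}. (t - gauss_tau N k) / (gauss_tau N i - gauss_tau N k))"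

definition lagr :: "nat \<Rightarrow> nat \<Rightarrow> real \<Rightarrow> real" where
  "lagr N j t = (\<Prod>k\<in>{0..N} - {j}. (t - gauss_tau N k) / (gauss_tau N j - gauss_tau N k))"

definition Dmat :: "nat \<Rightarrow> nat \<Rightarrow> nat \<Rightarrow> real" where
  "Dmat N i j = deriv (lagr N j) (gauss_tau N i)"

definition Ddag :: "nat \<Rightarrow> nat \<Rightarrow> nat \<Rightarrow> real" where
  "Ddag N i j = - (gauss_weight N j / gauss_weight N i) * Dmat N j i"

end

theory Submission
  imports Defs "HOL-Computational_Algebra.Fundamental_Theorem_Algebra"
begin

text \<open>Let l_j be the Lagrange basis on tau_0, ..., tau_N and m_i(t) = l_(N+1-i)(-t). Since
  tau_(N+1-k) = -tau_k, the product l_j m_i vanishes at both endpoints, so the integral of its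
  derivative over [-1, 1] is zero. The polynomials l_j m_i' and m_i l_j' have degree below 2N,
  so Gauss quadrature integrates them exactly, and since l_j and m_i are nodal at the Gauss
  abscissas each quadrature sum collapses to a single term: omega_j m_i'(tau_j) +
  omega_i l_j'(tau_i) = 0, that is omega_i D_ij = omega_j D_(N+1-j,N+1-i). The reflection
  symmetry omega_(N+1-i) = omega_i of the weights turns this into the claim. Exactness of the
  quadrature rests on the classical facts that P_N is orthogonal to all polynomials of lower
  degree (a consequence of its Sturm-Liouville equation) and has N simple roots in (-1, 1).\<close>

section \<open>Integration of polynomials over [-1, 1]\<close>

definition poly_integral :: "real poly \<Rightarrow> real" where
  "poly_integral p = integral {-1..1} (poly p)"

lemma poly_integrable_on [simp]: "poly p integrable_on {a..b :: real}"
  by (rule integrable_continuous_interval) (auto intro: continuous_intros)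

lemma poly_integral_add: "poly_integral (p + q) = poly_integral p + poly_integral q"
  unfolding poly_integral_def poly_add[abs_def] by (rule integral_add) simp_all

lemma poly_integral_diff: "poly_integral (p - q) = poly_integral p - poly_integral q"
  unfolding poly_integral_def poly_diff[abs_def] by (rule integral_diff) simp_all

lemma poly_integral_smult: "poly_integral (smult c p) = c * poly_integral p"
  unfolding poly_integral_def poly_smult[abs_def] by simp

lemma poly_integral_minus: "poly_integral (- p) = - poly_integral p"
  unfolding poly_integral_def poly_minus[abs_def] by simp

lemma poly_integral_0 [simp]: "poly_integral 0 = 0"
  by (simp add: poly_integral_def poly_0[abs_def])

lemma poly_integral_sum: "poly_integral (\<Sum>a\<in>A. f a) = (\<Sum>a\<in>A. poly_integral (f a))"
  by (induction A rule: infinite_finite_induct) (simp_all add: poly_integral_add)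

lemma poly_integral_pderiv: "poly_integral (pderiv p) = poly p 1 - poly p (-1)"
  unfolding poly_integral_def
  by (rule integral_unique, rule fundamental_theorem_of_calculus)
     (auto simp: has_real_derivative_iff_has_vector_derivative[symmetric]
           intro: has_field_derivative_at_within)

lemma poly_integral_pos:
  assumes "\<And>x. x \<in> {-1..1} \<Longrightarrow> poly c x \<ge> 0" "c \<noteq> 0" "g \<noteq> 0"
  shows "poly_integral (c * g * g) > 0"
proof -
  have nonneg: "poly (c * g * g) x \<ge> 0" if "x \<in> {-1..1}" for x
    using assms(1)[OF that] by (simp add: mult.assoc)
  have cont: "continuous_on {-1..1} (poly (c * g * g))"
    by (intro continuous_intros)
  have "finite {x. poly (c * g * g) x = 0}"
    by (rule poly_roots_finite) (use assms in auto)
  moreover have "infinite {-1..(1::real)}"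
    by (rule infinite_Icc) simp
  ultimately have "\<not> (\<forall>x \<in> {-1..1}. poly (c * g * g) x = 0)"
    by (metis (mono_tags) finite_subset mem_Collect_eq subsetI)
  moreover have "poly_integral (c * g * g) = 0 \<longleftrightarrow> (\<forall>x \<in> {-1..1}. poly (c * g * g) x = 0)"
    unfolding poly_integral_def by (rule integral_eq_0_iff[OF cont]) (use nonneg in auto)
  moreover have "poly_integral (c * g * g) \<ge> 0"
    unfolding poly_integral_def using nonneg by (intro integral_nonneg) auto
  ultimately show ?thesis by linarith
qed

lemma poly_integral_pderiv_symmetric:
  assumes "poly A 1 = 0" "poly A (-1) = 0"
  shows "poly_integral (pderiv (A * pderiv p) * q) = poly_integral (pderiv (A * pderiv q) * p)"
proof -
  have "poly_integral (pderiv (A * pderiv p * q - A * pderiv q * p)) = 0"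
    unfolding poly_integral_pderiv using assms by simp
  moreover have "pderiv (A * pderiv p * q - A * pderiv q * p)
      = pderiv (A * pderiv p) * q - pderiv (A * pderiv q) * p"
    by (simp add: pderiv_mult pderiv_diff algebra_simps)
  ultimately show ?thesis by (simp add: poly_integral_diff)
qed

lemma poly_integral_reflect: "poly_integral (pcompose p [:0, -1:]) = poly_integral p"
  unfolding poly_integral_def poly_pcompose
  using Henstock_Kurzweil_Integration.integral_reflect_real[of 1 "-1" "poly p"] by simp

section \<open>Legendre polynomials\<close>

lemma poly_legendre_Suc_Suc:
  "(real n + 2) * poly (legendre (Suc (Suc n))) x =
     (2 * n + 3) * x * poly (legendre (Suc n)) x - (n + 1) * poly (legendre n) x"
  by (simp add: field_simps)

lemma legendre_Suc_Suc:
  "smult (real n + 2) (legendre (Suc (Suc n))) =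
     smult (real (2 * n + 3)) ([:0, 1:] * legendre (Suc n)) - smult (real (n + 1)) (legendre n)"
  by (rule poly_eq_poly_eq_iff[THEN iffD1]) (auto simp: poly_legendre_Suc_Suc algebra_simps)

lemma legendre_degree_coeff: "degree (legendre n) \<le> n \<and> coeff (legendre n) n > 0"
proof (induction n rule: legendre.induct)
  case (3 n)
  then have "degree (smult (real (2 * n + 3)) ([:0, 1:] * legendre (Suc n))
      - smult (real (n + 1)) (legendre n)) \<le> Suc (Suc n)"
    by (intro degree_diff_le order.trans[OF degree_smult_le]) (auto simp: degree_pCons_le)
  moreover have "coeff (legendre n) (Suc (Suc n)) = 0"
    using "3.IH"(2) by (simp add: coeff_eq_0)
  ultimately show ?case
    using "3.IH" by (auto intro: order.trans[OF degree_smult_le])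
qed auto

lemma degree_legendre [simp]: "degree (legendre n) = n"
  using legendre_degree_coeff[of n] le_degree[of "legendre n" n] by auto

lemma legendre_nonzero [simp]: "legendre n \<noteq> 0"
  using legendre_degree_coeff[of n] by auto

lemma poly_legendre_minus: "poly (legendre n) (- x) = (-1) ^ n * poly (legendre n) x"
  by (induction n rule: legendre.induct) (auto simp: algebra_simps)

lemma poly_pderiv_legendre_Suc_Suc:
  "(real n + 2) * poly (pderiv (legendre (Suc (Suc n)))) x =
     (2 * n + 3) * (poly (legendre (Suc n)) x + x * poly (pderiv (legendre (Suc n))) x)
     - (n + 1) * poly (pderiv (legendre n)) x"
  using arg_cong[OF legendre_Suc_Suc[of n], of "\<lambda>p. poly (pderiv p) x"]
  by (simp del: legendre.simps add: pderiv_smult pderiv_diff pderiv_mult pderiv_pCons algebra_simps)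

lemma poly_pderiv_legendre_identities:
  "x * poly (pderiv (legendre (Suc n))) x - poly (pderiv (legendre n)) x
     = real (Suc n) * poly (legendre (Suc n)) x \<and>
   (1 - x\<^sup>2) * poly (pderiv (legendre (Suc n))) x
     = real (Suc n) * (poly (legendre n) x - x * poly (legendre (Suc n)) x)"
proof (induction n)
  case 0
  then show ?case by (simp add: pderiv_pCons power2_eq_square)
next
  case (Suc m)
  have nz: "real m + 2 \<noteq> 0" by linarith
  \<comment> \<open>Scaled by \<open>m + 2\<close> so that the step is an ideal membership problem for \<open>algebra\<close>.\<close>
  have "(real m + 2) * (x * poly (pderiv (legendre (Suc (Suc m)))) x
        - poly (pderiv (legendre (Suc m))) x)
      = (real m + 2) * (real (Suc (Suc m)) * poly (legendre (Suc (Suc m))) x) \<and>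
    (real m + 2) * ((1 - x\<^sup>2) * poly (pderiv (legendre (Suc (Suc m)))) x)
      = (real m + 2) * (real (Suc (Suc m))
          * (poly (legendre (Suc m)) x - x * poly (legendre (Suc (Suc m))) x))"
    using Suc poly_legendre_Suc_Suc[of m x] poly_pderiv_legendre_Suc_Suc[of m x]
    by (simp only: of_nat_Suc) algebra
  then show ?case using nz by (simp del: legendre.simps)
qed

lemma legendre_sturm_liouville:
  "pderiv ([:1, 0, -1:] * pderiv (legendre n)) = smult (- (real n * (real n + 1))) (legendre n)"
proof (cases n)
  case (Suc m)
  have "[:1, 0, -1:] * pderiv (legendre (Suc m))
      = smult (real (Suc m)) (legendre m - [:0, 1:] * legendre (Suc m))"
    by (rule poly_eq_poly_eq_iff[THEN iffD1])
       (use poly_pderiv_legendre_identities[of _ m]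
         in \<open>auto simp: algebra_simps power2_eq_square\<close>)
  then have "pderiv ([:1, 0, -1:] * pderiv (legendre (Suc m)))
      = smult (real (Suc m))
          (pderiv (legendre m) - legendre (Suc m) - [:0, 1:] * pderiv (legendre (Suc m)))"
    by (simp add: pderiv_smult pderiv_diff pderiv_mult pderiv_pCons algebra_simps)
  also have "\<dots> = smult (- (real (Suc m) * (real (Suc m) + 1))) (legendre (Suc m))"
    by (rule poly_eq_poly_eq_iff[THEN iffD1])
       (use poly_pderiv_legendre_identities[of _ m] in \<open>auto simp: algebra_simps\<close>)
  finally show ?thesis using Suc by simp
qed simp

lemma sturm_liouville_monom:
  "pderiv ([:1, 0, -1:] * pderiv (monom 1 k))
     = smult (real k * (real k - 1)) (monom 1 (k - 2)) - smult (real k * (real k + 1)) (monom 1 k)"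
proof (cases k)
  case (Suc j)
  have "[:1, 0, -1:] * pderiv (monom 1 k) = smult (real k) (monom 1 j - monom 1 (j + 2))"
    by (rule poly_eq_poly_eq_iff[THEN iffD1])
       (auto simp: Suc pderiv_monom poly_monom algebra_simps power2_eq_square)
  then show ?thesis
    by (simp only: pderiv_smult pderiv_diff pderiv_monom smult_diff_right smult_monom)
       (simp add: Suc algebra_simps)
qed (simp add: pderiv_monom)

lemma legendre_orthogonal_monom:
  "k < n \<Longrightarrow> poly_integral (legendre n * monom 1 k) = 0"
proof (induction k rule: less_induct)
  case (less k)
  let ?P = "legendre n"
  have "- (real n * (real n + 1)) * poly_integral (?P * monom 1 k)
      = poly_integral (pderiv ([:1, 0, -1:] * pderiv ?P) * monom 1 k)"
    unfolding legendre_sturm_liouville by (simp only: mult_smult_left poly_integral_smult)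
  also have "\<dots> = poly_integral (pderiv ([:1, 0, -1:] * pderiv (monom 1 k)) * ?P)"
    by (rule poly_integral_pderiv_symmetric) simp_all
  also have "\<dots> = real k * (real k - 1) * poly_integral (?P * monom 1 (k - 2))
                   - real k * (real k + 1) * poly_integral (?P * monom 1 k)"
    unfolding sturm_liouville_monom by (simp add: algebra_simps poly_integral_diff poly_integral_smult)
  also have "real k * (real k - 1) * poly_integral (?P * monom 1 (k - 2)) = 0"
    using less by (cases "k \<ge> 2") auto
  finally have "(real n * (real n + 1) - real k * (real k + 1)) * poly_integral (?P * monom 1 k) = 0"
    by (simp add: algebra_simps)
  moreover have "real k * (real k + 1) < real n * (real n + 1)"
    using less by (intro mult_strict_mono) auto
  ultimately show ?case by simp
qed

lemma legendre_orthogonal: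
  assumes "degree q < n"
  shows "poly_integral (legendre n * q) = 0"
proof -
  have "legendre n * q = legendre n * (\<Sum>i\<le>degree q. smult (coeff q i) (monom 1 i))"
    by (simp add: smult_monom poly_as_sum_of_monoms)
  also have "\<dots> = (\<Sum>i\<le>degree q. smult (coeff q i) (legendre n * monom 1 i))"
    by (simp add: sum_distrib_left mult_smult_right)
  finally have "legendre n * q = (\<Sum>i\<le>degree q. smult (coeff q i) (legendre n * monom 1 i))" .
  then show ?thesis
    using assms by (simp add: poly_integral_sum poly_integral_smult legendre_orthogonal_monom)
qed

section \<open>Roots of Legendre polynomials\<close>

lemma legendre_no_definite_factor:
  assumes "c dvd legendre n" "degree c \<ge> 1"
    and "(\<forall>x\<in>{-1..1}. poly c x \<ge> 0) \<or> (\<forall>x\<in>{-1..1}. poly c x \<le> 0)"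
  shows False
proof -
  obtain g where g: "legendre n = c * g"
    using assms(1) by (auto elim: dvdE)
  have nz: "c \<noteq> 0" "g \<noteq> 0"
    using g legendre_nonzero[of n] by auto
  have "degree g < n"
    using arg_cong[OF g, of degree] degree_mult_eq[OF nz] assms(2) by simp
  then have "poly_integral (c * g * g) = 0"
    using legendre_orthogonal[of g n] g by (simp add: mult.assoc)
  moreover have "poly_integral (c * g * g) > 0 \<or> poly_integral ((- c) * g * g) > 0"
    using assms(3) nz poly_integral_pos[of c g] poly_integral_pos[of "- c" g] by auto
  ultimately show False
    by (auto simp: poly_integral_minus)
qed

lemma legendre_root_bounds:
  assumes "poly (legendre n) r = 0"
  shows "-1 < r \<and> r < 1"
proof (rule ccontr)
  assume "\<not> (-1 < r \<and> r < 1)"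
  then have "(\<forall>x\<in>{-1..1}. poly [:-r, 1:] x \<ge> 0) \<or> (\<forall>x\<in>{-1..1}. poly [:-r, 1:] x \<le> 0)"
    by auto
  moreover have "[:-r, 1:] dvd legendre n"
    using assms by (simp add: poly_eq_0_iff_dvd)
  ultimately show False
    using legendre_no_definite_factor[of "[:-r, 1:]"] by auto
qed

abbreviation of_real_poly :: "real poly \<Rightarrow> complex poly" where
  "of_real_poly \<equiv> map_poly complex_of_real"

lemma coeff_of_real_poly [simp]: "coeff (of_real_poly p) n = of_real (coeff p n)"
  by (simp add: coeff_map_poly)

lemma of_real_poly_add: "of_real_poly (p + q) = of_real_poly p + of_real_poly q"
  by (rule poly_eqI) simp

lemma of_real_poly_mult: "of_real_poly (p * q) = of_real_poly p * of_real_poly q"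
  by (induction p) (auto simp: of_real_poly_add map_poly_pCons map_poly_smult)

lemma degree_of_real_poly [simp]: "degree (of_real_poly p) = degree p"
  by (rule degree_map_poly) simp

lemma of_real_poly_eq_0_iff [simp]: "of_real_poly p = 0 \<longleftrightarrow> p = 0"
  by (auto simp: poly_eq_iff)

lemma poly_of_real_poly: "poly (of_real_poly p) (of_real x) = of_real (poly p x)"
  by (induction p) (auto simp: map_poly_pCons)

lemma of_real_poly_dvdD:
  assumes "of_real_poly a dvd of_real_poly b" "a \<noteq> 0"
  shows "a dvd b"
proof -
  have "of_real_poly b = of_real_poly (b div a) * of_real_poly a + of_real_poly (b mod a)"
    by (metis of_real_poly_add of_real_poly_mult div_mult_mod_eq)
  then have "of_real_poly a dvd of_real_poly (b mod a)"
    using assms(1) by (metis dvd_add_right_iff dvd_triv_right)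
  moreover have "degree (of_real_poly (b mod a)) < degree (of_real_poly a)" if "b mod a \<noteq> 0"
    using degree_mod_less'[OF assms(2) that] by simp
  ultimately have "b mod a = 0"
    using dvd_imp_degree_le not_le of_real_poly_eq_0_iff by blast
  then show ?thesis
    by (simp add: mod_eq_0_iff_dvd)
qed

lemma legendre_no_conjugate_pair_factor:
  assumes "[:-z, 1:] * [:-cnj z, 1:] dvd of_real_poly (legendre n)"
  shows False
proof -
  define Q where "Q = [:(Re z)\<^sup>2 + (Im z)\<^sup>2, -2 * Re z, 1:]"
  have "of_real_poly Q = [:-z, 1:] * [:-cnj z, 1:]"
    by (simp add: Q_def complex_eq_iff map_poly_pCons power2_eq_square)
  then have "Q dvd legendre n"
    using assms by (intro of_real_poly_dvdD) (auto simp: Q_def)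
  moreover have "\<forall>x\<in>{-1..1}. poly Q x \<ge> 0"
  proof
    fix x
    have "poly Q x = (x - Re z)\<^sup>2 + (Im z)\<^sup>2"
      by (simp add: Q_def algebra_simps power2_eq_square)
    then show "poly Q x \<ge> 0" by simp
  qed
  moreover have "degree Q \<ge> 1"
    by (simp add: Q_def)
  ultimately show False
    using legendre_no_definite_factor by blast
qed

lemma card_legendre_roots: "card {x. poly (legendre n) x = 0} = n"
proof -
  let ?p = "of_real_poly (legendre n)"
  obtain z where z: "smult (lead_coeff ?p) (\<Prod>i<degree ?p. [:-z i, 1:]) = ?p"
    by (rule complex_poly_decompose')
  have roots: "poly ?p w = 0 \<longleftrightarrow> (\<exists>i<n. w = z i)" for w
  proof -
    have "poly ?p w = lead_coeff ?p * (\<Prod>i<n. w - z i)"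
      by (subst z[symmetric]) (simp add: poly_prod)
    then show ?thesis
      using legendre_degree_coeff[of n] by auto
  qed
  have no_conj: "z b \<noteq> cnj (z a)" if "a < n" "b < n" "a \<noteq> b" for a b
  proof
    assume conj: "z b = cnj (z a)"
    have "(\<Prod>i\<in>{a, b}. [:-z i, 1:]) dvd (\<Prod>i<n. [:-z i, 1:])"
      using that by (intro prod_dvd_prod_subset) auto
    moreover have "(\<Prod>i\<in>{a, b}. [:-z i, 1:]) = [:-z a, 1:] * [:-cnj (z a), 1:]"
      using that conj by simp
    ultimately have "[:-z a, 1:] * [:-cnj (z a), 1:] dvd ?p"
      by (metis z dvd_smult degree_of_real_poly degree_legendre)
    then show False
      by (rule legendre_no_conjugate_pair_factor)
  qed
  have real: "cnj (z i) = z i" if "i < n" for i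
  proof -
    have "poly ?p (cnj (z i)) = 0"
      using roots[of "z i"] that real_poly_cnj_root_iff[of ?p] by auto
    then obtain b where "b < n" "cnj (z i) = z b"
      using roots by auto
    then show ?thesis
      using no_conj[OF that] by (cases "b = i") auto
  qed
  have "inj_on (\<lambda>i. Re (z i)) {..<n}"
  proof (rule inj_onI)
    fix a b assume ab: "a \<in> {..<n}" "b \<in> {..<n}" "Re (z a) = Re (z b)"
    then have "z b = cnj (z a)"
      using real[of a] real[of b] by (auto simp: complex_eq_iff)
    then show "a = b"
      using no_conj[of a b] ab by auto
  qed
  moreover have "{x. poly (legendre n) x = 0} = (\<lambda>i. Re (z i)) ` {..<n}"
  proof -
    have "poly (legendre n) x = 0 \<longleftrightarrow> (\<exists>i<n. of_real x = z i)" for x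
      using roots[of "of_real x"] by (simp add: poly_of_real_poly)
    moreover have "of_real x = z i \<longleftrightarrow> x = Re (z i)" if "i < n" for x i
      using real[OF that] by (auto simp: complex_eq_iff)
    ultimately show ?thesis
      by auto
  qed
  ultimately show ?thesis
    by (simp add: card_image)
qed

lemma legendre_roots_reflect:
  "uminus ` {x. poly (legendre n) x = 0} = {x. poly (legendre n) x = 0}"
  by (force simp: poly_legendre_minus intro: image_eqI[of _ uminus "- _"])

section \<open>Lagrange interpolation and Gauss quadrature\<close>

definition lagrange_basis :: "('i \<Rightarrow> 'a :: field) \<Rightarrow> 'i set \<Rightarrow> 'i \<Rightarrow> 'a poly" where
  "lagrange_basis x A j = (\<Prod>k\<in>A - {j}. smult (1 / (x j - x k)) [:- x k, 1:])"

lemma poly_lagrange_basis: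
  "poly (lagrange_basis x A j) t = (\<Prod>k\<in>A - {j}. (t - x k) / (x j - x k))"
  unfolding lagrange_basis_def poly_prod by (simp add: algebra_simps diff_divide_distrib)

lemma degree_lagrange_basis:
  assumes "finite A" "j \<in> A"
  shows "degree (lagrange_basis x A j) \<le> card A - 1"
proof -
  have "degree (lagrange_basis x A j)
      \<le> (\<Sum>k\<in>A - {j}. degree (smult (1 / (x j - x k)) [:- x k, 1:]))"
    unfolding lagrange_basis_def by (rule degree_prod_sum_le[unfolded comp_def]) (simp add: assms(1))
  also have "\<dots> \<le> (\<Sum>k\<in>A - {j}. 1)"
    by (intro sum_mono order.trans[OF degree_smult_le]) simp
  finally show ?thesis
    using assms by simp
qed

lemma poly_lagrange_basis_node:
  assumes "finite A" "inj_on x A" "j \<in> A" "k \<in> A"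
  shows "poly (lagrange_basis x A j) (x k) = (if k = j then 1 else 0)"
proof (cases "k = j")
  case True
  have "x j \<noteq> x m" if "m \<in> A - {j}" for m
    using that assms(2,3) by (auto dest: inj_onD)
  then show ?thesis
    using True by (simp add: poly_lagrange_basis)
next
  case False
  then have "k \<in> A - {j}"
    using assms(4) by simp
  then show ?thesis
    using False assms(1) by (auto simp: poly_lagrange_basis prod_zero_iff)
qed

lemma lagrange_interpolation:
  assumes "finite A" "inj_on x A" "degree r < card A"
  shows "r = (\<Sum>k\<in>A. smult (poly r (x k)) (lagrange_basis x A k))" (is "r = ?s")
proof (rule poly_eqI_degree[of "x ` A"])
  fix t assume "t \<in> x ` A"
  then obtain m where m: "m \<in> A" "t = x m"
    by blast
  have "poly ?s (x m) = (\<Sum>k\<in>A. poly r (x k) * (if m = k then 1 else 0))"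
    unfolding poly_sum poly_smult
    by (intro sum.cong refl) (simp add: poly_lagrange_basis_node assms(1,2) m(1))
  also have "\<dots> = poly r (x m)"
    using assms(1) m(1) by (simp add: if_distrib cong: if_cong)
  finally show "poly r t = poly ?s t"
    using m by simp
next
  have "card (x ` A) = card A"
    using assms(2) by (rule card_image)
  moreover have "degree ?s \<le> card A - 1"
    by (intro degree_sum_le order.trans[OF degree_smult_le] degree_lagrange_basis assms(1))
  ultimately show "degree r < card (x ` A)" "degree ?s < card (x ` A)"
    using assms(3) by auto
qed

lemma poly_lagrange_basis_reflect:
  assumes "\<And>k. k \<in> A \<Longrightarrow> \<sigma> k \<in> A" "\<And>k. k \<in> A \<Longrightarrow> \<sigma> (\<sigma> k) = k"
    and "\<And>k. k \<in> A \<Longrightarrow> x (\<sigma> k) = - x k" "j \<in> A"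
  shows "poly (lagrange_basis x A (\<sigma> j)) (- t) = poly (lagrange_basis x A j) t"
  unfolding poly_lagrange_basis
proof (rule prod.reindex_bij_witness[of _ \<sigma> \<sigma>])
  show "\<sigma> (\<sigma> k) = k" if "k \<in> A - {\<sigma> j}" for k
    using that assms(2) by simp
  show "\<sigma> (\<sigma> k) = k" if "k \<in> A - {j}" for k
    using that assms(2) by simp
  show "\<sigma> k \<in> A - {j}" if "k \<in> A - {\<sigma> j}" for k
    using that assms(1,2) by (metis Diff_iff singleton_iff)
  show "\<sigma> k \<in> A - {\<sigma> j}" if "k \<in> A - {j}" for k
    using that assms(1,2,4) by (metis Diff_iff singleton_iff)
  show "(t - x (\<sigma> k)) / (x j - x (\<sigma> k)) = (- t - x k) / (x (\<sigma> j) - x k)"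
    if "k \<in> A - {\<sigma> j}" for k
  proof -
    have "x (\<sigma> k) = - x k" "x (\<sigma> j) = - x j"
      using that assms(3,4) by simp_all
    moreover have "(- t - x k) / (- x j - x k) = (- (t + x k)) / (- (x j + x k))"
      by simp
    ultimately show ?thesis
      by (simp only: minus_divide_divide diff_minus_eq_add)
  qed
qed

locale gauss_nodes =
  fixes x :: "'i \<Rightarrow> real" and A :: "'i set" and P :: "real poly"
  assumes finite_nodes: "finite A"
    and inj_nodes: "inj_on x A"
    and degree_eq_card: "degree P = card A"
    and poly_at_nodes: "\<And>k. k \<in> A \<Longrightarrow> poly P (x k) = 0"
    and orthogonal: "\<And>q. degree q < card A \<Longrightarrow> poly_integral (P * q) = 0"
begin

lemma integral_eq_quadrature:
  assumes "degree p < 2 * card A"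
  shows "poly_integral p = (\<Sum>k\<in>A. poly_integral (lagrange_basis x A k) * poly p (x k))"
proof -
  have card_pos: "card A > 0"
    using assms by simp
  then have "P \<noteq> 0"
    using degree_eq_card by auto
  define q r where "q = p div P" and "r = p mod P"
  have p: "p = P * q + r"
    unfolding q_def r_def by (simp add: mult.commute)
  have dr: "degree r < card A"
    using degree_mod_less'[OF \<open>P \<noteq> 0\<close>, of p] card_pos degree_eq_card
    unfolding r_def by (cases "p mod P = 0") auto
  have dq: "degree q < card A"
  proof (cases "q = 0")
    case False
    have "degree (P * q) = card A + degree q"
      using False \<open>P \<noteq> 0\<close> degree_eq_card by (simp add: degree_mult_eq)
    moreover have "degree (P * q) < 2 * card A"
      using degree_diff_le_max[of p r] assms dr p by (simp add: algebra_simps)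
    ultimately show ?thesis
      by simp
  qed (simp add: card_pos)
  have "poly_integral p = poly_integral r"
    using p orthogonal[OF dq] by (simp add: poly_integral_add)
  also have "\<dots> = poly_integral (\<Sum>k\<in>A. smult (poly r (x k)) (lagrange_basis x A k))"
    using lagrange_interpolation[OF finite_nodes inj_nodes dr] by (rule arg_cong)
  also have "\<dots> = (\<Sum>k\<in>A. poly_integral (lagrange_basis x A k) * poly p (x k))"
    unfolding poly_integral_sum poly_integral_smult
    by (intro sum.cong refl) (simp add: p poly_at_nodes)
  finally show ?thesis .
qed

lemma integral_nodal_mult:
  assumes "j \<in> A" "\<And>k. k \<in> A \<Longrightarrow> poly f (x k) = (if k = j then 1 else 0)"
    and "degree (f * g) < 2 * card A"
  shows "poly_integral (f * g) = poly_integral (lagrange_basis x A j) * poly g (x j)"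
proof -
  have "poly_integral (f * g)
      = (\<Sum>k\<in>A. poly_integral (lagrange_basis x A k) * poly (f * g) (x k))"
    using assms(3) by (rule integral_eq_quadrature)
  also have "\<dots>
      = (\<Sum>k\<in>A. if k = j then poly_integral (lagrange_basis x A k) * poly g (x k) else 0)"
    by (intro sum.cong refl) (simp add: assms(2))
  also have "\<dots> = poly_integral (lagrange_basis x A j) * poly g (x j)"
    using finite_nodes assms(1) by simp
  finally show ?thesis .
qed

lemma quadrature_weight_pos:
  assumes "j \<in> A"
  shows "poly_integral (lagrange_basis x A j) > 0"
proof -
  let ?l = "lagrange_basis x A j"
  have node: "poly ?l (x k) = (if k = j then 1 else 0)" if "k \<in> A" for k
    using finite_nodes inj_nodes assms that by (rule poly_lagrange_basis_node)
  have "card A > 0"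
    using assms finite_nodes card_gt_0_iff by blast
  then have "degree (?l * ?l) < 2 * card A"
    using degree_mult_le[of ?l ?l] degree_lagrange_basis[OF finite_nodes assms, of x] by linarith
  then have "poly_integral (1 * ?l * ?l) = poly_integral ?l"
    using integral_nodal_mult[OF assms node] node[OF assms] by simp
  moreover have "?l \<noteq> 0"
    using node[OF assms] by auto
  then have "poly_integral (1 * ?l * ?l) > 0"
    by (intro poly_integral_pos) auto
  ultimately show ?thesis
    by simp
qed

end

section \<open>Gauss nodes and weights\<close>

lemma sorted_list_of_set_reflect:
  fixes S :: "'a :: linordered_ab_group_add set"
  assumes "finite S" "uminus ` S = S" "k < card S"
  shows "sorted_list_of_set S ! (card S - 1 - k) = - sorted_list_of_set S ! k"
proof -
  let ?s = "sorted_list_of_set S"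
  have "set (rev (map uminus ?s)) = S"
    using assms(1,2) by simp
  then have "sorted_list_of_set S = rev (map uminus ?s)"
    using assms(1) by (intro sorted_list_of_set_unique[THEN iffD1])
      (auto simp: sorted_wrt_rev sorted_wrt_map)
  then have "?s ! (card S - 1 - k) = rev (map uminus ?s) ! (card S - 1 - k)"
    by simp
  also have "\<dots> = - ?s ! k"
    using assms(3) by (simp add: rev_nth)
  finally show ?thesis .
qed

lemma gauss_tau_0 [simp]: "gauss_tau N 0 = -1"
  by (simp add: gauss_tau_def)

lemma gauss_tau_Suc [simp]: "gauss_tau N (Suc N) = 1"
  by (simp add: gauss_tau_def)

lemma gauss_tau_nth:
  assumes "k \<in> {1..N}"
  shows "gauss_tau N k = sorted_list_of_set {x. poly (legendre N) x = 0} ! (k - 1)"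
  using assms by (simp add: gauss_tau_def)

lemma poly_legendre_gauss_tau:
  assumes "k \<in> {1..N}"
  shows "poly (legendre N) (gauss_tau N k) = 0"
proof -
  have "gauss_tau N k \<in> set (sorted_list_of_set {x. poly (legendre N) x = 0})"
    unfolding gauss_tau_nth[OF assms]
    using assms by (intro nth_mem) (auto simp: card_legendre_roots)
  then show ?thesis
    by (simp add: poly_roots_finite)
qed

lemma inj_on_gauss_tau: "inj_on (gauss_tau N) {0..N+1}"
proof -
  let ?s = "sorted_list_of_set {x. poly (legendre N) x = 0}"
  have "inj_on (gauss_tau N) {1..N}"
  proof (rule inj_onI)
    fix a b assume ab: "a \<in> {1..N}" "b \<in> {1..N}" "gauss_tau N a = gauss_tau N b"
    then have "?s ! (a - 1) = ?s ! (b - 1)"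
      by (simp add: gauss_tau_nth)
    then have "a - 1 = b - 1"
      using ab(1,2) nth_eq_iff_index_eq[of ?s] by (auto simp: card_legendre_roots)
    then show "a = b"
      using ab(1,2) by auto
  qed
  moreover have "{0..N+1} = insert 0 (insert (Suc N) {1..N})"
    by auto
  moreover have "-1 < gauss_tau N k \<and> gauss_tau N k < 1" if "k \<in> {1..N}" for k
    using legendre_root_bounds[OF poly_legendre_gauss_tau[OF that]] .
  ultimately show ?thesis
    by force
qed

lemma gauss_tau_reflect:
  assumes "k \<le> N + 1"
  shows "gauss_tau N (N + 1 - k) = - gauss_tau N k"
proof -
  consider "k = 0" | "k = N + 1" | "k \<in> {1..N}"
    using assms by force
  then show ?thesis
  proof cases
    case 3
    then have "N + 1 - k \<in> {1..N}" "N + 1 - k - 1 = N - 1 - (k - 1)"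
      by auto
    then have "gauss_tau N (N + 1 - k)
        = sorted_list_of_set {x. poly (legendre N) x = 0} ! (N - 1 - (k - 1))"
      by (simp only: gauss_tau_nth)
    also have "\<dots> = - gauss_tau N k"
      using 3 sorted_list_of_set_reflect[OF _ legendre_roots_reflect[of N], where k = "k - 1"]
      by (auto simp: gauss_tau_nth card_legendre_roots poly_roots_finite)
    finally show ?thesis .
  qed simp_all
qed

lemma gauss_nodes_legendre: "gauss_nodes (gauss_tau N) {1..N} (legendre N)"
proof
  show "inj_on (gauss_tau N) {1..N}"
    using inj_on_gauss_tau by (rule inj_on_subset) auto
qed (simp_all add: poly_legendre_gauss_tau legendre_orthogonal)

lemma gauss_weight_eq: "gauss_weight N i = poly_integral (lagrange_basis (gauss_tau N) {1..N} i)"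
  unfolding gauss_weight_def poly_integral_def poly_lagrange_basis[abs_def] ..

lemma Dmat_eq: "Dmat N i j = poly (pderiv (lagrange_basis (gauss_tau N) {0..N} j)) (gauss_tau N i)"
proof -
  have "lagr N j = poly (lagrange_basis (gauss_tau N) {0..N} j)"
    unfolding lagr_def poly_lagrange_basis[abs_def] ..
  then show ?thesis
    unfolding Dmat_def by (simp add: DERIV_imp_deriv[OF poly_DERIV])
qed

lemma gauss_weight_pos: "i \<in> {1..N} \<Longrightarrow> gauss_weight N i > 0"
  unfolding gauss_weight_eq by (rule gauss_nodes.quadrature_weight_pos[OF gauss_nodes_legendre])

lemma gauss_weight_reflect:
  assumes "i \<in> {1..N}"
  shows "gauss_weight N (N + 1 - i) = gauss_weight N i"
proof -
  let ?l = "lagrange_basis (gauss_tau N) {1..N}"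
  have "pcompose (?l (N + 1 - i)) [:0, -1:] = ?l i"
  proof (rule poly_eq_poly_eq_iff[THEN iffD1], rule ext)
    fix t
    have "poly (pcompose (?l (N + 1 - i)) [:0, -1:]) t = poly (?l (N + 1 - i)) (- t)"
      by (simp add: poly_pcompose)
    also have "\<dots> = poly (?l i) t"
      by (rule poly_lagrange_basis_reflect[where \<sigma> = "\<lambda>k. N + 1 - k"])
         (use assms gauss_tau_reflect in auto)
    finally show "poly (pcompose (?l (N + 1 - i)) [:0, -1:]) t = poly (?l i) t" .
  qed
  then show ?thesis
    unfolding gauss_weight_eq by (metis poly_integral_reflect)
qed

lemma poly_reflected_lagrange_basis_gauss_tau:
  assumes "i \<in> {1..N}" "k \<in> {1..N+1}"
  shows "poly (pcompose (lagrange_basis (gauss_tau N) {0..N} (N + 1 - i)) [:0, -1:]) (gauss_tau N k)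
    = (if k = i then 1 else 0)"
proof -
  let ?l = "lagrange_basis (gauss_tau N) {0..N}"
  have "gauss_tau N (N + 1 - k) = - gauss_tau N k"
    using assms(2) by (intro gauss_tau_reflect) simp
  then have "poly (pcompose (?l (N + 1 - i)) [:0, -1:]) (gauss_tau N k)
      = poly (?l (N + 1 - i)) (gauss_tau N (N + 1 - k))"
    by (simp add: poly_pcompose)
  also have "\<dots> = (if k = i then 1 else 0)"
    using assms inj_on_subset[OF inj_on_gauss_tau] by (subst poly_lagrange_basis_node) auto
  finally show ?thesis .
qed

lemma gauss_weight_Dmat_reflect:
  assumes i: "i \<in> {1..N}" and j: "j \<in> {1..N}"
  shows "gauss_weight N i * Dmat N i j = gauss_weight N j * Dmat N (N + 1 - j) (N + 1 - i)"
proof -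
  let ?tau = "gauss_tau N" and ?l = "lagrange_basis (gauss_tau N) {0..N}"
  define L where "L = ?l j"
  define M where "M = pcompose (?l (N + 1 - i)) [:0, -1:]"
  have L_node: "poly L (?tau k) = (if k = j then 1 else 0)" if "k \<in> {0..N}" for k
    unfolding L_def using inj_on_subset[OF inj_on_gauss_tau] j that
    by (intro poly_lagrange_basis_node) auto
  have M_node: "poly M (?tau k) = (if k = i then 1 else 0)" if "k \<in> {1..N+1}" for k
    unfolding M_def using i that by (rule poly_reflected_lagrange_basis_gauss_tau)
  have "N + 1 - i \<in> {0..N}"
    using i by auto
  then have "degree L \<le> N" "degree M \<le> N"
    using degree_lagrange_basis[of "{0..N}" j] degree_lagrange_basis[of "{0..N}" "N + 1 - i"] j
    by (auto simp: L_def M_def degree_pcompose)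
  then have deg: "degree (L * pderiv M) < 2 * card {1..N}" "degree (M * pderiv L) < 2 * card {1..N}"
    using i degree_mult_le[of L "pderiv M"] degree_mult_le[of M "pderiv L"]
    by (auto simp: degree_pderiv)
  have "poly L (-1) = 0" "poly M 1 = 0"
    using M_node[of "N + 1"] L_node[of 0] i j by auto
  then have "poly_integral (L * pderiv M) + poly_integral (M * pderiv L) = 0"
    using poly_integral_pderiv[of "L * M"] by (simp add: pderiv_mult poly_integral_add)
  moreover have "poly_integral (L * pderiv M) = - gauss_weight N j * Dmat N (N + 1 - j) (N + 1 - i)"
  proof -
    have "poly (pderiv M) (?tau j) = - poly (pderiv (?l (N + 1 - i))) (?tau (N + 1 - j))"
      using j gauss_tau_reflect[of j N] by (simp add: M_def pderiv_pcompose pderiv_pCons poly_pcompose)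
    then show ?thesis
      using gauss_nodes.integral_nodal_mult[OF gauss_nodes_legendre j _ deg(1)] L_node j
      by (simp add: gauss_weight_eq Dmat_eq)
  qed
  moreover have "poly_integral (M * pderiv L) = gauss_weight N i * Dmat N i j"
    using gauss_nodes.integral_nodal_mult[OF gauss_nodes_legendre i _ deg(2)] M_node i
    by (simp add: gauss_weight_eq Dmat_eq L_def)
  ultimately show ?thesis
    by simp
qed

theorem proposition9p1:
  fixes N :: nat
  assumes "N \<ge> 1"
  shows "\<forall>i\<in>{1..N}. \<forall>j\<in>{1..N}. Dmat N i j = - Ddag N (N + 1 - i) (N + 1 - j)"
proof (intro ballI)
  fix i j assume i: "i \<in> {1..N}" and j: "j \<in> {1..N}"
  have "- Ddag N (N + 1 - i) (N + 1 - j)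
      = gauss_weight N j / gauss_weight N i * Dmat N (N + 1 - j) (N + 1 - i)"
    unfolding Ddag_def using gauss_weight_reflect[OF i] gauss_weight_reflect[OF j] by simp
  also have "\<dots> = Dmat N i j"
    using gauss_weight_Dmat_reflect[OF i j] gauss_weight_pos[OF i] by (simp add: field_simps)
  finally show "Dmat N i j = - Ddag N (N + 1 - i) (N + 1 - j)"
    by simp
qed

end
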